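(* Let $0<a<b<1$ with $a+b=1$, $m\in C^1([0,1])$ non-constant, $c\in C([0,1])$, and assume (H1), (H2) and $m\in S_{\mathcal{N}}$. Then $\liminf_{s\to+\infty}\lambda(s)\ge\lambda^{\mathcal{N}}$.
   Context: Fix an integer $d\ge1$. $\lambda(s)$ denotes the principal eigenvalue of $-\varphi''-\frac{d-1}{r}\varphi'-2s\,m'(r)\varphi'+c(r)\varphi=\lambda\varphi$ on $(0,1)$, $\varphi'(0)=\varphi'(1)=0$; equivalently $\lambda(s)=\min\{\int_0^1 r^{d-1}e^{2sm}(|\varphi'|^2+c\varphi^2)dr:\ \varphi\in H^1((0,1)),\ \int_0^1 r^{d-1}e^{2sm}\varphi^2dr=1\}$. $\lambda^{\mathcal{D}}$ (resp. $\lambda^{\mathcal{N}}$) is the principal eigenvalue of $-\varphi''-\frac{d-1}{r}\varphi'+c\varphi=\lambda\varphi$ on $(a,b)$ with Dirichlet (resp. Neumann) boundary conditions, i.e. the minimum of $\int_a^b r^{d-1}(|\varphi'|^2+c\varphi^2)dr$ over $\varphi\in H^1_0((a,b))$ (resp. $H^1((a,b))$) with $\int_a^b r^{d-1}\varphi^2dr=1$. (H1): $m(r)=m(1-r)$ on $[0,1]$ and $m\equiv0$ on $[a,b]$, where $a+b=1$. (H2): $c>0$ on $[0,1]$ and $c(r)>\lambda^{\mathcal{D}}$ for $r\in[0,a]\cup[b,1]$. Step function $\bar m$: given $\delta\in(0,a)$, constants $0<h<\alpha<\beta<1<\nu$ and $l\in\mathbb{N}$ with $\sum_{i\ge1}(\alpha^{i+l}+\beta^{i+l})=a-\delta$,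 put $Y_0=\delta$, $Y_n=\delta+\sum_{i=1}^n(\alpha^{i+l}+\beta^{i+l})$ and $X_n=Y_n-\beta^{n+l}$ for $n\ge1$; define $\bar m(r)=h^n$ on $[Y_{n-1},X_n]$ and $\bar m(r)=-\nu h^n$ on $[X_n,Y_n]$ for $n\ge1$, and $\bar m(r)=\bar m(1-r)$ for $r\in[b,1-\delta]$. $S_{\mathcal{N}}$: the set of $m\in C^1([0,1])$ such that, for some such $\delta,h,\alpha,\beta,\nu,l$, $m'$ changes sign only finitely many times in $[0,\delta)\cup(1-\delta,1]$ and $m(r)\le\bar m(r)$ for all $r\in[\delta,a]\cup[b,1-\delta]$. *)

theory Defs
  imports "HOL-Analysis.Analysis"
begin

text \<open>phi belongs to H^1((p,q)) with weak derivative g: g is square integrable on [p,q]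
  and phi (its continuous representative) is the primitive of g.\<close>
definition H1_with_deriv :: "real \<Rightarrow> real \<Rightarrow> (real \<Rightarrow> real) \<Rightarrow> (real \<Rightarrow> real) \<Rightarrow> bool" where
  "H1_with_deriv p q phi g \<longleftrightarrow>
     g \<in> borel_measurable lborel \<and>
     set_integrable lborel {p..q} (\<lambda>r. (g r)^2) \<and>
     (\<forall>x\<in>{p..q}. phi x = phi p + (LINT t:{p..x}|lborel. g t))"

text \<open>Principal eigenvalue via the weighted Rayleigh quotient with weight w
  (Neumann: test functions in H^1; the minimum is the infimum).\<close>
definition eig_N :: "(real \<Rightarrow> real) \<Rightarrow> (real \<Rightarrow> real) \<Rightarrow> real \<Rightarrow> real \<Rightarrow> real" where
  "eig_N w c p q = Inf {(LINT r:{p..q}|lborel. w r * ((g r)^2 + c r * (phi r)^2)) | phi g.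
      H1_with_deriv p q phi g \<and> (LINT r:{p..q}|lborel. w r * (phi r)^2) = 1}"

definition eig_D :: "(real \<Rightarrow> real) \<Rightarrow> (real \<Rightarrow> real) \<Rightarrow> real \<Rightarrow> real \<Rightarrow> real" where
  "eig_D w c p q = Inf {(LINT r:{p..q}|lborel. w r * ((g r)^2 + c r * (phi r)^2)) | phi g.
      H1_with_deriv p q phi g \<and> phi p = 0 \<and> phi q = 0 \<and>
      (LINT r:{p..q}|lborel. w r * (phi r)^2) = 1}"

definition lam :: "nat \<Rightarrow> (real \<Rightarrow> real) \<Rightarrow> (real \<Rightarrow> real) \<Rightarrow> real \<Rightarrow> real" where
  "lam d m c s = eig_N (\<lambda>r. r ^ (d - 1) * exp (2 * s * m r)) c 0 1"

definition lamN :: "nat \<Rightarrow> (real \<Rightarrow> real) \<Rightarrow> real \<Rightarrow> real \<Rightarrow> real" where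
  "lamN d c a b = eig_N (\<lambda>r. r ^ (d - 1)) c a b"

definition lamD :: "nat \<Rightarrow> (real \<Rightarrow> real) \<Rightarrow> real \<Rightarrow> real \<Rightarrow> real" where
  "lamD d c a b = eig_D (\<lambda>r. r ^ (d - 1)) c a b"

definition finitely_many_sign_changes :: "(real \<Rightarrow> real) \<Rightarrow> real set \<Rightarrow> bool" where
  "finitely_many_sign_changes f A \<longleftrightarrow>
     (\<exists>F. finite F \<and> (\<forall>x\<in>A. \<forall>y\<in>A. x < y \<and> {x..y} \<inter> F = {} \<longrightarrow>
        \<not> (\<exists>u\<in>{x..y}. \<exists>v\<in>{x..y}. f u > 0 \<and> f v < 0)))"

text \<open>Breakpoints Y_n and X_n of the step function bar m.\<close>
definition Ypt :: "real \<Rightarrow> real \<Rightarrow> real \<Rightarrow> nat \<Rightarrow> nat \<Rightarrow> real" where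
  "Ypt \<delta> \<alpha> \<beta> l n = \<delta> + (\<Sum>i=1..n. \<alpha> ^ (i + l) + \<beta> ^ (i + l))"

definition Xpt :: "real \<Rightarrow> real \<Rightarrow> real \<Rightarrow> nat \<Rightarrow> nat \<Rightarrow> real" where
  "Xpt \<delta> \<alpha> \<beta> l n = Ypt \<delta> \<alpha> \<beta> l n - \<beta> ^ (n + l)"

text \<open>m is below the step function bar m on [delta,a] (and, by symmetry bar m(r) = bar m(1-r),
  on [b,1-delta]).\<close>
definition below_step :: "(real \<Rightarrow> real) \<Rightarrow> real \<Rightarrow> real \<Rightarrow> real \<Rightarrow> real \<Rightarrow> real \<Rightarrow> nat \<Rightarrow> bool" where
  "below_step m \<delta> h \<alpha> \<beta> \<nu> l \<longleftrightarrow>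
     (\<forall>n\<ge>1.
        (\<forall>r\<in>{Ypt \<delta> \<alpha> \<beta> l (n - 1) .. Xpt \<delta> \<alpha> \<beta> l n}. m r \<le> h ^ n \<and> m (1 - r) \<le> h ^ n) \<and>
        (\<forall>r\<in>{Xpt \<delta> \<alpha> \<beta> l n .. Ypt \<delta> \<alpha> \<beta> l n}. m r \<le> - \<nu> * h ^ n \<and> m (1 - r) \<le> - \<nu> * h ^ n))"

definition S_N :: "real \<Rightarrow> (real \<Rightarrow> real) \<Rightarrow> (real \<Rightarrow> real) \<Rightarrow> bool" where
  "S_N a m m' \<longleftrightarrow>
     (\<exists>\<delta> h \<alpha> \<beta> \<nu> (l::nat).
        0 < \<delta> \<and> \<delta> < a \<and> 0 < h \<and> h < \<alpha> \<and> \<alpha> < \<beta> \<and> \<beta> < 1 \<and> 1 < \<nu> \<and>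
        (\<lambda>i. \<alpha> ^ (Suc i + l) + \<beta> ^ (Suc i + l)) sums (a - \<delta>) \<and>
        finitely_many_sign_changes m' ({0..<\<delta>} \<union> {1 - \<delta><..1}) \<and>
        below_step m \<delta> h \<alpha> \<beta> \<nu> l)"

end

theory Submission
  imports Defs
begin

text \<open>On [a,b] the weight r^(d-1) e^(2sm) reduces to r^(d-1), so there the energy of any test
  function is at least lamN times its mass. Outside [a,b] the potential c exceeds lamD, and
  lamD \<ge> lamN because Dirichlet test functions are admissible for the Neumann problem; so the
  energy is pointwise at least lamN times the mass density. Adding both parts gives
  lam s \<ge> lamN for every s, hence also for the liminf.\<close>

lemma set_integrable_mult_continuous:
  fixes f h :: "real \<Rightarrow> real"
  assumes f: "set_integrable lborel {p..q} f" and h: "continuous_on {p..q} h"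
  shows "set_integrable lborel {p..q} (\<lambda>x. h x * f x)"
proof -
  obtain B where B: "\<And>x. x \<in> {p..q} \<Longrightarrow> \<bar>h x\<bar> \<le> B"
    using compact_imp_bounded[OF compact_continuous_image[OF h compact_Icc]]
    unfolding bounded_iff by (metis image_eqI real_norm_def)
  show ?thesis
  proof (rule set_integrable_bound)
    show "set_integrable lborel {p..q} (\<lambda>x. B * f x)"
      using f by simp
    show "set_borel_measurable lborel {p..q} (\<lambda>x. h x * f x)"
    proof -
      have "(\<lambda>x. (indicator {p..q} x *\<^sub>R h x) * (indicator {p..q} x *\<^sub>R f x))
          \<in> borel_measurable lborel"
        using borel_measurable_continuous_on_indicator[OF _ h] f
        unfolding set_integrable_def by (auto intro!: borel_measurable_times)
      also have "(\<lambda>x. (indicator {p..q} x *\<^sub>R h x) * (indicator {p..q} x *\<^sub>R f x))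
          = (\<lambda>x. indicator {p..q} x *\<^sub>R (h x * f x))"
        by (auto simp: indicator_def)
      finally show ?thesis
        unfolding set_borel_measurable_def .
    qed
    show "AE x in lborel. x \<in> {p..q} \<longrightarrow> norm (h x * f x) \<le> norm (B * f x)"
      using B by (intro AE_I2) (force simp: abs_mult intro!: mult_right_mono)
  qed
qed

lemma set_integral_pos_if_continuous:
  fixes f :: "real \<Rightarrow> real"
  assumes "p < q" "continuous_on {p..q} f" "\<And>x. x \<in> {p..q} \<Longrightarrow> 0 \<le> f x"
    and "x0 \<in> {p..q}" "0 < f x0"
  shows "0 < (LINT x:{p..q}|lborel. f x)"
proof -
  have "(LINT x:{p..q}|lborel. f x) = integral {p..q} f"
    using set_borel_integral_eq_integral(2)[OF borel_integrable_atLeastAtMost'] assms(2) by blast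
  moreover have "integral {p..q} f \<noteq> 0"
    using integral_eq_0_iff[OF assms(2,1,3)] assms(4,5) by force
  moreover have "0 \<le> integral {p..q} f"
    using assms(2,3) by (intro integral_nonneg integrable_continuous_real) auto
  ultimately show ?thesis by linarith
qed

lemma set_integrable_if_square_integrable:
  fixes g :: "real \<Rightarrow> real"
  assumes "g \<in> borel_measurable lborel" "set_integrable lborel {p..q} (\<lambda>r. (g r)^2)"
  shows "set_integrable lborel {p..q} g"
proof (rule set_integrable_bound)
  show "set_integrable lborel {p..q} (\<lambda>r. 1 + (g r)^2)"
    using set_integral_add(1)[OF borel_integrable_atLeastAtMost'[of p q "\<lambda>_. 1"] assms(2)] by simp
  show "set_borel_measurable lborel {p..q} g"
    using assms(1) unfolding set_borel_measurable_def by measurable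
  have "\<bar>y\<bar> \<le> 1 + y^2" for y :: real
    using sum_power2_ge_zero[of "\<bar>y\<bar> - 1/2" 0] by (simp add: power2_eq_square algebra_simps)
  then show "AE x in lborel. x \<in> {p..q} \<longrightarrow> norm (g x) \<le> norm (1 + (g x)^2)"
    by (intro AE_I2) (metis add_nonneg_nonneg order.trans real_norm_def abs_of_nonneg zero_le_one zero_le_power2)
qed

lemma set_integral_Icc_combine:
  fixes g :: "real \<Rightarrow> real"
  assumes "set_integrable lborel {p..q} g" "p \<le> a" "a \<le> x" "x \<le> q"
  shows "(LINT t:{p..x}|lborel. g t) = (LINT t:{p..a}|lborel. g t) + (LINT t:{a..x}|lborel. g t)"
proof -
  have sub: "set_integrable lborel {u..v} g" if "p \<le> u" "v \<le> q" for u v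
    using that by (intro set_integrable_subset[OF assms(1)]) auto
  have "integral {p..a} g + integral {a..x} g = integral {p..x} g"
    using assms by (intro Henstock_Kurzweil_Integration.integral_combine
        set_borel_integral_eq_integral(1)[OF sub]) auto
  then show ?thesis
    using assms by (simp add: set_borel_integral_eq_integral(2)[OF sub])
qed

lemma set_integral_Diff_split:
  fixes f :: "_ \<Rightarrow> real"
  assumes "set_integrable M B f" "A \<in> sets M" "B \<in> sets M" "A \<subseteq> B"
  shows "(LINT x:B|M. f x) = (LINT x:A|M. f x) + (LINT x:B - A|M. f x)"
proof -
  have "B = A \<union> (B - A)" using assms(4) by blast
  then show ?thesis
    using assms by (metis Diff_disjoint set_integral_Un set_integrable_subset sets.Diff Diff_subset)
qed

lemma H1_with_deriv_scale:
  assumes "H1_with_deriv p q phi g"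
  shows "H1_with_deriv p q (\<lambda>x. k * phi x) (\<lambda>x. k * g x)"
proof -
  have g: "g \<in> borel_measurable lborel" "set_integrable lborel {p..q} (\<lambda>r. (g r)^2)"
    and prim: "\<forall>x\<in>{p..q}. phi x = phi p + (LINT t:{p..x}|lborel. g t)"
    using assms unfolding H1_with_deriv_def by blast+
  have "set_integrable lborel {p..q} (\<lambda>r. (k * g r)^2)"
    using g(2) by (simp add: power_mult_distrib)
  moreover have "(\<lambda>x. k * g x) \<in> borel_measurable lborel"
    using g(1) by measurable
  moreover have "\<forall>x\<in>{p..q}. k * phi x = k * phi p + (LINT t:{p..x}|lborel. k * g t)"
    using prim by (metis set_integral_mult_right distrib_left)
  ultimately show ?thesis
    unfolding H1_with_deriv_def by blast
qed

lemma H1_with_deriv_restrict: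
  assumes H: "H1_with_deriv p q phi g" and "p \<le> a" "a \<le> b" "b \<le> q"
  shows "H1_with_deriv a b phi g"
proof -
  have g: "g \<in> borel_measurable lborel" "set_integrable lborel {p..q} (\<lambda>r. (g r)^2)"
    and prim: "\<And>x. x \<in> {p..q} \<Longrightarrow> phi x = phi p + (LINT t:{p..x}|lborel. g t)"
    using H unfolding H1_with_deriv_def by blast+
  have gint: "set_integrable lborel {p..q} g"
    by (rule set_integrable_if_square_integrable[OF g])
  have "phi x = phi a + (LINT t:{a..x}|lborel. g t)" if "x \<in> {a..b}" for x
  proof -
    have "phi x = phi p + (LINT t:{p..a}|lborel. g t) + (LINT t:{a..x}|lborel. g t)"
      using that assms prim[of x] set_integral_Icc_combine[OF gint, of a x] by simp
    also have "phi p + (LINT t:{p..a}|lborel. g t) = phi a"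
      using assms prim[of a] by simp
    finally show ?thesis .
  qed
  moreover have "set_integrable lborel {a..b} (\<lambda>r. (g r)^2)"
    using assms by (intro set_integrable_subset[OF g(2)]) auto
  ultimately show ?thesis
    using g(1) unfolding H1_with_deriv_def by blast
qed

lemma H1_with_deriv_continuous:
  assumes "H1_with_deriv p q phi g"
  shows "continuous_on {p..q} phi"
proof -
  have g: "set_integrable lborel {p..q} g"
    using assms set_integrable_if_square_integrable unfolding H1_with_deriv_def by blast
  have "phi x = phi p + integral {p..x} g" if "x \<in> {p..q}" for x
    using that assms set_borel_integral_eq_integral(2)[OF set_integrable_subset[OF g]]
    unfolding H1_with_deriv_def by fastforce
  moreover have "continuous_on {p..q} (\<lambda>x. phi p + integral {p..x} g)"
    using indefinite_integral_continuous_1[OF set_borel_integral_eq_integral(1)[OF g]]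
    by (intro continuous_intros)
  ultimately show ?thesis
    by (metis (no_types, lifting) continuous_on_eq)
qed

lemma H1_with_deriv_const: "H1_with_deriv p q (\<lambda>_. k) (\<lambda>_. 0)"
  unfolding H1_with_deriv_def set_integrable_def by simp

lemma H1_with_deriv_tent:
  assumes "p \<le> q"
  shows "H1_with_deriv p q (\<lambda>r. (r - p) * (q - r)) (\<lambda>r. p + q - 2 * r)"
  unfolding H1_with_deriv_def
proof (intro conjI ballI)
  show "set_integrable lborel {p..q} (\<lambda>r. (p + q - 2 * r)^2)"
    by (intro borel_integrable_atLeastAtMost' continuous_intros)
  fix x assume x: "x \<in> {p..q}"
  have "(LINT t:{p..x}|lborel. p + q - 2 * t) = (x - p) * (q - x) - (p - p) * (q - p)"
    unfolding set_lebesgue_integral_def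
  proof (rule integral_FTC_atLeastAtMost)
    show "continuous_on {p..x} (\<lambda>t. p + q - 2 * t)"
      by (intro continuous_intros)
    show "((\<lambda>t. (t - p) * (q - t)) has_vector_derivative p + q - 2 * y) (at y within {p..x})" for y
      unfolding has_real_derivative_iff_has_vector_derivative[symmetric]
      by (auto intro!: derivative_eq_intros simp: algebra_simps)
  qed (use x in auto)
  then show "(x - p) * (q - x) = (p - p) * (q - p) + (LINT t:{p..x}|lborel. p + q - 2 * t)"
    by linarith
qed measurable

definition energy ::
    "(real \<Rightarrow> real) \<Rightarrow> (real \<Rightarrow> real) \<Rightarrow> real \<Rightarrow> real \<Rightarrow> (real \<Rightarrow> real) \<Rightarrow> (real \<Rightarrow> real) \<Rightarrow> real"
  where "energy w c p q phi g = (LINT r:{p..q}|lborel. w r * ((g r)^2 + c r * (phi r)^2))"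

definition mass :: "(real \<Rightarrow> real) \<Rightarrow> real \<Rightarrow> real \<Rightarrow> (real \<Rightarrow> real) \<Rightarrow> real"
  where "mass w p q phi = (LINT r:{p..q}|lborel. w r * (phi r)^2)"

lemma eig_N_eq_Inf_energy:
  "eig_N w c p q = Inf {energy w c p q phi g | phi g. H1_with_deriv p q phi g \<and> mass w p q phi = 1}"
  unfolding eig_N_def energy_def mass_def ..

lemma eig_D_eq_Inf_energy:
  "eig_D w c p q = Inf {energy w c p q phi g | phi g.
     H1_with_deriv p q phi g \<and> phi p = 0 \<and> phi q = 0 \<and> mass w p q phi = 1}"
  unfolding eig_D_def energy_def mass_def ..

lemma eig_N_cong:
  assumes "\<And>r. r \<in> {p..q} \<Longrightarrow> w r = v r"
  shows "eig_N w c p q = eig_N v c p q"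
proof -
  have "energy w c p q = energy v c p q" "mass w p q = mass v p q"
    using assms unfolding energy_def mass_def
    by (auto intro!: ext set_lebesgue_integral_cong)
  then show ?thesis
    unfolding eig_N_eq_Inf_energy by simp
qed

lemma energy_nonneg:
  assumes "\<And>r. r \<in> {p..q} \<Longrightarrow> 0 \<le> w r" "\<And>r. r \<in> {p..q} \<Longrightarrow> 0 \<le> c r"
  shows "0 \<le> energy w c p q phi g"
  unfolding energy_def set_lebesgue_integral_def
  using assms by (intro Bochner_Integration.integral_nonneg) (simp add: indicator_def)

lemma mass_nonneg:
  assumes "\<And>r. r \<in> {p..q} \<Longrightarrow> 0 \<le> w r"
  shows "0 \<le> mass w p q phi"
  unfolding mass_def set_lebesgue_integral_def
  using assms by (intro Bochner_Integration.integral_nonneg) (simp add: indicator_def)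

lemma energy_scale: "energy w c p q (\<lambda>x. k * phi x) (\<lambda>x. k * g x) = k^2 * energy w c p q phi g"
proof -
  have "(\<lambda>r. w r * ((k * g r)^2 + c r * (k * phi r)^2))
      = (\<lambda>r. k^2 * (w r * ((g r)^2 + c r * (phi r)^2)))"
    by (simp add: fun_eq_iff power_mult_distrib algebra_simps)
  then show ?thesis
    unfolding energy_def by simp
qed

lemma mass_scale: "mass w p q (\<lambda>x. k * phi x) = k^2 * mass w p q phi"
proof -
  have "(\<lambda>r. w r * (k * phi r)^2) = (\<lambda>r. k^2 * (w r * (phi r)^2))"
    by (simp add: fun_eq_iff power_mult_distrib algebra_simps)
  then show ?thesis
    unfolding mass_def by simp
qed

lemma bdd_below_energy:
  assumes "\<And>r. r \<in> {p..q} \<Longrightarrow> 0 \<le> w r" "\<And>r. r \<in> {p..q} \<Longrightarrow> 0 \<le> c r"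
  shows "bdd_below {energy w c p q phi g | phi g. P phi g}"
  using energy_nonneg[OF assms] by (auto intro: bdd_belowI[of _ 0])

lemma H1_with_deriv_normalize:
  assumes H: "H1_with_deriv p q phi g" and pos: "0 < mass w p q phi"
  defines "k \<equiv> 1 / sqrt (mass w p q phi)"
  shows "H1_with_deriv p q (\<lambda>x. k * phi x) (\<lambda>x. k * g x)"
    and "mass w p q (\<lambda>x. k * phi x) = 1"
    and "energy w c p q (\<lambda>x. k * phi x) (\<lambda>x. k * g x) = energy w c p q phi g / mass w p q phi"
proof -
  have k2: "k^2 = 1 / mass w p q phi"
    unfolding k_def using pos by (simp add: power_divide)
  show "H1_with_deriv p q (\<lambda>x. k * phi x) (\<lambda>x. k * g x)"
    by (rule H1_with_deriv_scale[OF H])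
  show "mass w p q (\<lambda>x. k * phi x) = 1"
    using pos by (simp add: mass_scale k2)
  show "energy w c p q (\<lambda>x. k * phi x) (\<lambda>x. k * g x) = energy w c p q phi g / mass w p q phi"
    by (simp add: energy_scale k2)
qed

lemma eig_N_mult_mass_le_energy:
  assumes w: "\<And>r. r \<in> {p..q} \<Longrightarrow> 0 \<le> w r" and c: "\<And>r. r \<in> {p..q} \<Longrightarrow> 0 \<le> c r"
    and H: "H1_with_deriv p q phi g"
  shows "eig_N w c p q * mass w p q phi \<le> energy w c p q phi g"
proof (cases "mass w p q phi = 0")
  case True
  then show ?thesis
    using energy_nonneg[OF w c] by simp
next
  case False
  then have pos: "0 < mass w p q phi"
    using mass_nonneg[OF w] by (simp add: order_less_le)
  note normalized = H1_with_deriv_normalize[OF H pos]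
  have "eig_N w c p q \<le> energy w c p q phi g / mass w p q phi"
    unfolding eig_N_eq_Inf_energy normalized(3)[where c = c, symmetric]
    by (rule cInf_lower[OF _ bdd_below_energy[OF w c]]) (use normalized(1,2) in blast)
  then show ?thesis
    using pos by (simp add: field_simps)
qed

lemma eig_N_le_eig_D:
  assumes "p < q"
    and w: "continuous_on {p..q} w" "\<And>r. r \<in> {p..q} \<Longrightarrow> 0 \<le> w r"
    and x0: "x0 \<in> {p<..<q}" "0 < w x0"
    and c: "\<And>r. r \<in> {p..q} \<Longrightarrow> 0 \<le> c r"
  shows "eig_N w c p q \<le> eig_D w c p q"
proof -
  define tent where "tent = (\<lambda>r::real. (r - p) * (q - r))"
  have H: "H1_with_deriv p q tent (\<lambda>r. p + q - 2 * r)"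
    unfolding tent_def using H1_with_deriv_tent \<open>p < q\<close> by simp
  have "0 < mass w p q tent"
    unfolding mass_def
    by (rule set_integral_pos_if_continuous[of p q _ x0])
      (use assms in \<open>auto simp: tent_def intro!: continuous_intros\<close>)
  note normalized = H1_with_deriv_normalize[OF H this]
  have "{energy w c p q phi g | phi g.
      H1_with_deriv p q phi g \<and> phi p = 0 \<and> phi q = 0 \<and> mass w p q phi = 1} \<noteq> {}"
    using normalized(1,2) by (force simp: tent_def)
  then show ?thesis
    unfolding eig_N_eq_Inf_energy eig_D_eq_Inf_energy
    by (rule cInf_superset_mono[OF _ bdd_below_energy[OF w(2) c]]) auto
qed

lemma eig_N_subinterval_mult_mass_le_energy:
  assumes "p \<le> a" "a \<le> b" "b \<le> q"
    and w: "continuous_on {p..q} w" "\<And>r. r \<in> {p..q} \<Longrightarrow> 0 \<le> w r"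
    and c: "continuous_on {p..q} c" "\<And>r. r \<in> {a..b} \<Longrightarrow> 0 \<le> c r"
    and outside: "\<And>r. r \<in> {p..q} - {a..b} \<Longrightarrow> eig_N w c a b \<le> c r"
    and H: "H1_with_deriv p q phi g"
  shows "eig_N w c a b * mass w p q phi \<le> energy w c p q phi g"
proof -
  define L where "L = eig_N w c a b"
  define Out where "Out = {p..q} - {a..b}"
  have phi: "continuous_on {p..q} phi"
    by (rule H1_with_deriv_continuous[OF H])
  have g2: "set_integrable lborel {p..q} (\<lambda>r. (g r)^2)"
    using H unfolding H1_with_deriv_def by blast
  have int_mass: "set_integrable lborel {p..q} (\<lambda>r. w r * (phi r)^2)"
    by (intro borel_integrable_atLeastAtMost' continuous_intros w phi)
  have "set_integrable lborel {p..q} (\<lambda>r. w r * (g r)^2 + c r * (w r * (phi r)^2))"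
    by (intro set_integral_add(1) set_integrable_mult_continuous[OF g2 w(1)]
        borel_integrable_atLeastAtMost' continuous_intros c phi w)
  then have int_energy: "set_integrable lborel {p..q} (\<lambda>r. w r * ((g r)^2 + c r * (phi r)^2))"
    by (simp add: algebra_simps)
  have mass_split: "mass w p q phi = mass w a b phi + (LINT r:Out|lborel. w r * (phi r)^2)"
    unfolding mass_def Out_def using assms(1-3)
    by (intro set_integral_Diff_split[OF int_mass]) auto
  have energy_split: "energy w c p q phi g
      = energy w c a b phi g + (LINT r:Out|lborel. w r * ((g r)^2 + c r * (phi r)^2))"
    unfolding energy_def Out_def using assms(1-3)
    by (intro set_integral_Diff_split[OF int_energy]) auto
  have inner: "L * mass w a b phi \<le> energy w c a b phi g"
    unfolding L_def using assms
    by (intro eig_N_mult_mass_le_energy H1_with_deriv_restrict[OF H]) auto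
  have "(LINT r:Out|lborel. L * (w r * (phi r)^2))
      \<le> (LINT r:Out|lborel. w r * ((g r)^2 + c r * (phi r)^2))"
  proof (rule set_integral_mono)
    show "set_integrable lborel Out (\<lambda>r. L * (w r * (phi r)^2))"
      "set_integrable lborel Out (\<lambda>r. w r * ((g r)^2 + c r * (phi r)^2))"
      unfolding Out_def
      by (auto intro!: set_integrable_subset[OF int_mass] set_integrable_subset[OF int_energy])
    fix r assume r: "r \<in> Out"
    then have "0 \<le> w r" "L \<le> c r"
      using w(2) outside unfolding Out_def L_def by auto
    then have "L * (w r * (phi r)^2) \<le> c r * (w r * (phi r)^2)" "0 \<le> w r * (g r)^2"
      by (simp_all add: mult_right_mono)
    then show "L * (w r * (phi r)^2) \<le> w r * ((g r)^2 + c r * (phi r)^2)"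
      by (simp add: algebra_simps)
  qed
  then have outer: "L * (LINT r:Out|lborel. w r * (phi r)^2)
      \<le> (LINT r:Out|lborel. w r * ((g r)^2 + c r * (phi r)^2))"
    by simp
  show ?thesis
    using mass_split energy_split inner outer unfolding L_def[symmetric]
    by (simp add: distrib_left)
qed

lemma eig_N_subinterval_le:
  assumes "p \<le> a" "a \<le> b" "b \<le> q"
    and w: "continuous_on {p..q} w" "\<And>r. r \<in> {p..q} \<Longrightarrow> 0 \<le> w r"
    and c: "continuous_on {p..q} c" "\<And>r. r \<in> {a..b} \<Longrightarrow> 0 \<le> c r"
    and outside: "\<And>r. r \<in> {p..q} - {a..b} \<Longrightarrow> eig_N w c a b \<le> c r"
    and pos: "0 < mass w p q (\<lambda>_. 1)"
  shows "eig_N w c a b \<le> eig_N w c p q"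
  unfolding eig_N_eq_Inf_energy[of w c p q]
proof (rule cInf_greatest)
  note normalized = H1_with_deriv_normalize[OF H1_with_deriv_const pos]
  show "{energy w c p q phi g | phi g. H1_with_deriv p q phi g \<and> mass w p q phi = 1} \<noteq> {}"
    using normalized(1,2) by blast
  fix e assume "e \<in> {energy w c p q phi g | phi g. H1_with_deriv p q phi g \<and> mass w p q phi = 1}"
  then obtain phi g where "e = energy w c p q phi g" "H1_with_deriv p q phi g" "mass w p q phi = 1"
    by blast
  then show "eig_N w c a b \<le> e"
    using eig_N_subinterval_mult_mass_le_energy[OF assms(1-8)] by fastforce
qed

lemma lamN_le_lamD:
  assumes "0 < a" "a < b" "\<And>r. r \<in> {a..b} \<Longrightarrow> 0 \<le> c r"
  shows "lamN d c a b \<le> lamD d c a b"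
  unfolding lamN_def lamD_def
  by (rule eig_N_le_eig_D[of _ _ _ "(a + b) / 2"]) (use assms in \<open>auto intro!: continuous_intros\<close>)

lemma lamN_le_lam:
  assumes "0 < a" "a < b" "b < 1"
    and m: "continuous_on {0..1} m" "\<And>r. r \<in> {a..b} \<Longrightarrow> m r = 0"
    and c: "continuous_on {0..1} c" "\<And>r. r \<in> {a..b} \<Longrightarrow> 0 \<le> c r"
    and outside: "\<And>r. r \<in> {0..1} - {a..b} \<Longrightarrow> lamN d c a b \<le> c r"
  shows "lamN d c a b \<le> lam d m c s"
proof -
  define w where "w = (\<lambda>r. r ^ (d - 1) * exp (2 * s * m r))"
  have lamN_eq: "lamN d c a b = eig_N w c a b"
    unfolding lamN_def w_def using m(2) by (intro eig_N_cong) simp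
  have "0 < mass w 0 1 (\<lambda>_. 1)"
    unfolding mass_def w_def
    by (rule set_integral_pos_if_continuous[of 0 1 _ 1]) (auto intro!: continuous_intros m(1))
  then show ?thesis
    unfolding lam_def w_def[symmetric] lamN_eq
  proof (rule eig_N_subinterval_le[rotated -1])
    show "0 \<le> a" "a \<le> b" "b \<le> 1"
      using assms(1-3) by auto
    show "continuous_on {0..1} w"
      unfolding w_def by (intro continuous_intros m(1))
    show "0 \<le> w r" if "r \<in> {0..1}" for r
      using that unfolding w_def by simp
    show "eig_N w c a b \<le> c r" if "r \<in> {0..1} - {a..b}" for r
      using outside[OF that] by (simp add: lamN_eq)
  qed (use c in auto)
qed

theorem lemma3p7:
  fixes d :: nat and a b :: real and m m' c :: "real \<Rightarrow> real"
  assumes "d \<ge> 1"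
    and "0 < a" "a < b" "b < 1" "a + b = 1"
    and "\<And>x. x \<in> {0..1} \<Longrightarrow> (m has_real_derivative m' x) (at x within {0..1})"
    and "continuous_on {0..1} m'"
    and "\<not> (\<exists>k. \<forall>x\<in>{0..1}. m x = k)"
    and "continuous_on {0..1} c"
    and "\<And>r. r \<in> {0..1} \<Longrightarrow> m r = m (1 - r)"
    and "\<And>r. r \<in> {a..b} \<Longrightarrow> m r = 0"
    and "\<And>r. r \<in> {0..1} \<Longrightarrow> c r > 0"
    and "\<And>r. r \<in> {0..a} \<union> {b..1} \<Longrightarrow> c r > lamD d c a b"
    and "S_N a m m'"
  shows "Liminf at_top (\<lambda>s. ereal (lam d m c s)) \<ge> ereal (lamN d c a b)"
proof -
  have m_cont: "continuous_on {0..1} m"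
    using assms(6) DERIV_continuous continuous_on_eq_continuous_within by blast
  have c_nonneg: "0 \<le> c r" if "r \<in> {a..b}" for r
    using that assms(2,4) assms(12)[of r] by simp
  have "lamN d c a b \<le> lamD d c a b"
    by (rule lamN_le_lamD[OF assms(2,3) c_nonneg])
  then have c_outside: "lamN d c a b \<le> c r" if "r \<in> {0..1} - {a..b}" for r
    using assms(13)[of r] that by auto
  have "lamN d c a b \<le> lam d m c s" for s
    by (rule lamN_le_lam[OF assms(2,3,4) m_cont assms(11) assms(9) c_nonneg c_outside])
  then show ?thesis
    by (intro Liminf_bounded) auto
qed

end
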